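(* Under the dual metric loss, no algorithm that always produces a balanced clustering can achieve the $\alpha$-core for any $\alpha\ge1$; that is, for every $\alpha\ge1$ there exists a dual-metric-loss instance in which $k$ divides $n$ and no balanced clustering is in the $\alpha$-core.
   Context: Instance with dual metric loss: finite nonempty set $\mathcal{N}$ of $n$ agents, finite nonempty set $\mathcal{M}$ of feasible centers, positive integer $k$, pseudometric $d^m$ on $\mathcal{N}$, pseudometric $d^c$ on $\mathcal{N}\cup\mathcal{M}$; $\ell_i(C,x)=\max_{j\in C}d^m(i,j)+d^c(i,x)$ for $i\in C\subseteq\mathcal{N}$, $x\in\mathcal{M}$. A clustering is $\mathcal{X}=\{(C_1,x_1),\dots,(C_k,x_k)\}$ with $C_t$ pairwise disjoint (some possibly empty), union $\mathcal{N}$, $x_t\in\mathcal{M}$; $\ell_i(\mathcal{X})=\ell_i(C_t,x_t)$ where $i\in C_t$. It is balanced if, whenever $k$ divides $n$, $|C_t|=n/k$ for all $t$. For $\alpha\ge1$, $\mathcal{X}$ is in the $\alpha$-core if there is no $S\subseteq\mathcal{N}$ with $|S|\ge n/k$ and $y\in\mathcal{M}$ with $\alpha\,\ell_i(S,y)<\ell_i(\mathcal{X})$ for all $i\in S$. *)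

theory Defs
  imports Complex_Main
begin

text \<open>Agents have type 'a, feasible centers have type 'b; the center distance d^c
  lives on the disjoint union 'a + 'b (agents as Inl, centers as Inr).\<close>

definition pseudometric_on :: "'p set \<Rightarrow> ('p \<Rightarrow> 'p \<Rightarrow> real) \<Rightarrow> bool" where
  "pseudometric_on S d \<longleftrightarrow>
     (\<forall>x\<in>S. d x x = 0) \<and>
     (\<forall>x\<in>S. \<forall>y\<in>S. d x y \<ge> 0) \<and>
     (\<forall>x\<in>S. \<forall>y\<in>S. d x y = d y x) \<and>
     (\<forall>x\<in>S. \<forall>y\<in>S. \<forall>z\<in>S. d x z \<le> d x y + d y z)"

definition dual_instance ::
  "'a set \<Rightarrow> 'b set \<Rightarrow> nat \<Rightarrow> ('a \<Rightarrow> 'a \<Rightarrow> real) \<Rightarrow> ('a + 'b \<Rightarrow> 'a + 'b \<Rightarrow> real) \<Rightarrow> bool" where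
  "dual_instance N M k dm dc \<longleftrightarrow>
     finite N \<and> N \<noteq> {} \<and> finite M \<and> M \<noteq> {} \<and> k > 0 \<and>
     pseudometric_on N dm \<and> pseudometric_on (Inl ` N \<union> Inr ` M) dc"

definition dual_loss ::
  "('a \<Rightarrow> 'a \<Rightarrow> real) \<Rightarrow> ('a + 'b \<Rightarrow> 'a + 'b \<Rightarrow> real) \<Rightarrow> 'a \<Rightarrow> 'a set \<Rightarrow> 'b \<Rightarrow> real" where
  "dual_loss dm dc i C x = Max ((\<lambda>j. dm i j) ` C) + dc (Inl i) (Inr x)"

text \<open>A clustering is indexed by t < k: clusters C t (possibly empty), centers x t.\<close>
definition is_clustering ::
  "'a set \<Rightarrow> 'b set \<Rightarrow> nat \<Rightarrow> (nat \<Rightarrow> 'a set) \<Rightarrow> (nat \<Rightarrow> 'b) \<Rightarrow> bool" where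
  "is_clustering N M k C x \<longleftrightarrow>
     (\<forall>t<k. \<forall>t'<k. t \<noteq> t' \<longrightarrow> C t \<inter> C t' = {}) \<and>
     (\<Union>t\<in>{..<k}. C t) = N \<and>
     (\<forall>t<k. x t \<in> M)"

definition balanced :: "'a set \<Rightarrow> nat \<Rightarrow> (nat \<Rightarrow> 'a set) \<Rightarrow> bool" where
  "balanced N k C \<longleftrightarrow> (k dvd card N \<longrightarrow> (\<forall>t<k. card (C t) = card N div k))"

definition clustering_loss ::
  "('a \<Rightarrow> 'a \<Rightarrow> real) \<Rightarrow> ('a + 'b \<Rightarrow> 'a + 'b \<Rightarrow> real) \<Rightarrow> nat \<Rightarrow> (nat \<Rightarrow> 'a set) \<Rightarrow> (nat \<Rightarrow> 'b) \<Rightarrow> 'a \<Rightarrow> real" where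
  "clustering_loss dm dc k C x i =
     (let t = (THE t. t < k \<and> i \<in> C t) in dual_loss dm dc i (C t) (x t))"

definition in_alpha_core ::
  "real \<Rightarrow> 'a set \<Rightarrow> 'b set \<Rightarrow> nat \<Rightarrow> ('a \<Rightarrow> 'a \<Rightarrow> real) \<Rightarrow> ('a + 'b \<Rightarrow> 'a + 'b \<Rightarrow> real)
     \<Rightarrow> (nat \<Rightarrow> 'a set) \<Rightarrow> (nat \<Rightarrow> 'b) \<Rightarrow> bool" where
  "in_alpha_core \<alpha> N M k dm dc C x \<longleftrightarrow>
     \<not> (\<exists>S y. S \<subseteq> N \<and> real (card S) \<ge> real (card N) / real k \<and> y \<in> M \<and>
            (\<forall>i\<in>S. \<alpha> * dual_loss dm dc i S y < clustering_loss dm dc k C x i))"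

end

theory Submission
  imports Defs
begin

text \<open>Place agents 1, 2, 3 on a line at the positions of their own centers 1, 2, 3 (for \<open>d\<^sup>c\<close>),
  and place agent 0 at distance \<open>3\<alpha>\<close> from every other agent (for \<open>d\<^sup>m\<close>). In a balanced
  clustering with two clusters of size two, the partner \<open>p\<close> of agent 0 has loss at least \<open>3\<alpha>\<close>,
  and the other cluster contains an agent \<open>q\<close> that is not at its cluster's center, so its loss
  is positive. The pair \<open>{p, q}\<close> deviates to center \<open>q\<close>: there \<open>q\<close> has loss 0 and \<open>p\<close> has loss
  at most 2, and \<open>2\<alpha> < 3\<alpha>\<close>.\<close>

definition line_dist :: "('p \<Rightarrow> real) \<Rightarrow> 'p \<Rightarrow> 'p \<Rightarrow> real" where
  "line_dist f u v = \<bar>f u - f v\<bar>"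

lemma pseudometric_on_line_dist: "pseudometric_on S (line_dist f)"
  unfolding pseudometric_on_def line_dist_def by auto

lemma dual_loss_ge:
  assumes "finite C" "j \<in> C"
  shows "dm i j + dc (Inl i) (Inr y) \<le> dual_loss dm dc i C y"
  using assms unfolding dual_loss_def by (simp add: Max_ge)

lemma dual_loss_doubleton:
  "dual_loss dm dc i {u, v} y = max (dm i u) (dm i v) + dc (Inl i) (Inr y)"
  unfolding dual_loss_def by simp

lemma clustering_loss_eq:
  assumes "is_clustering N M k C x" "t < k" "i \<in> C t"
  shows "clustering_loss dm dc k C x i = dual_loss dm dc i (C t) (x t)"
proof -
  have "(THE t. t < k \<and> i \<in> C t) = t"
    using assms unfolding is_clustering_def by (intro the_equality) blast+
  then show ?thesis
    unfolding clustering_loss_def by simp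
qed

lemma clustering_loss_ge:
  assumes "is_clustering N M k C x" "t < k" "finite (C t)" "i \<in> C t" "j \<in> C t"
  shows "dm i j + dc (Inl i) (Inr (x t)) \<le> clustering_loss dm dc k C x i"
  using clustering_loss_eq[OF assms(1,2,4)] dual_loss_ge[OF assms(3,5)] by simp

lemma two_clustering_split:
  assumes "is_clustering N M 2 C x" "i \<in> N"
  obtains s t where "s < 2" "t < 2" "i \<in> C s" "C s \<inter> C t = {}" "C s \<union> C t = N"
proof -
  have lt2: "{..<2::nat} = {0, 1}" by auto
  have disj: "C 0 \<inter> C 1 = {}" and cover: "C 0 \<union> C 1 = N"
    using assms(1) unfolding is_clustering_def lt2 by auto
  show thesis
  proof (cases "i \<in> C 0")
    case True
    then show thesis using that[of 0 1] disj cover by simp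
  next
    case False
    then have "i \<in> C 1" using assms(2) cover by blast
    then show thesis using that[of 1 0] disj cover by (simp add: Int_commute Un_commute)
  qed
qed

lemma balanced_two_clustering_of_four:
  assumes clustering: "is_clustering N M 2 C x" and "balanced N 2 C" "card N = 4" "i \<in> N"
  obtains s t p where "s < 2" "t < 2" "C s = {i, p}" "p \<noteq> i" "card (C t) = 2"
    "C s \<inter> C t = {}" "C s \<union> C t = N"
proof -
  obtain s t where st: "s < 2" "t < 2" "i \<in> C s" "C s \<inter> C t = {}" "C s \<union> C t = N"
    using two_clustering_split[OF clustering assms(4)] by blast
  have "card (C s) = 2" "card (C t) = 2"
    using assms(2,3) st(1,2) unfolding balanced_def by auto
  then have "card (C s - {i}) = 1"
    using st(3) by simp
  then obtain p where p_rest: "C s - {i} = {p}"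
    by (rule card_1_singletonE)
  then have "C s = {i, p}"
    using insert_Diff[OF st(3)] by simp
  moreover have "p \<in> C s - {i}"
    unfolding p_rest by simp
  ultimately show thesis
    using that[of s t p] st \<open>card (C t) = 2\<close> by blast
qed

definition agent_pos :: "real \<Rightarrow> nat \<Rightarrow> real" where
  "agent_pos \<alpha> i = (if i = 0 then 3 * \<alpha> else 0)"

abbreviation far_agent_dm :: "real \<Rightarrow> nat \<Rightarrow> nat \<Rightarrow> real" where
  "far_agent_dm \<alpha> \<equiv> line_dist (agent_pos \<alpha>)"

abbreviation own_center_dc :: "nat + nat \<Rightarrow> nat + nat \<Rightarrow> real" where
  "own_center_dc \<equiv> line_dist (case_sum real real)"

lemma far_agent_instance:
  "dual_instance {0, 1, 2, 3} {1, 2, 3} 2 (far_agent_dm \<alpha>) own_center_dc"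
  unfolding dual_instance_def by (simp add: pseudometric_on_line_dist)

lemma far_agent_blocking_pair:
  fixes \<alpha> :: real
  assumes "\<alpha> \<ge> 1" "p \<in> {1, 2, 3}" "q \<in> {1, 2, 3}"
    and "cur p \<ge> 3 * \<alpha>" "cur q > 0"
  shows "\<forall>i\<in>{p, q}. \<alpha> * dual_loss (far_agent_dm \<alpha>) own_center_dc i {p, q} q < cur i"
proof -
  have "dual_loss (far_agent_dm \<alpha>) own_center_dc p {p, q} q = \<bar>real p - real q\<bar>"
    using assms(2,3) by (auto simp: dual_loss_doubleton line_dist_def agent_pos_def)
  also have "\<dots> \<le> 2"
    using assms(2,3) by auto
  finally have "\<alpha> * dual_loss (far_agent_dm \<alpha>) own_center_dc p {p, q} q \<le> \<alpha> * 2"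
    using assms(1) by (intro mult_left_mono) auto
  then have "\<alpha> * dual_loss (far_agent_dm \<alpha>) own_center_dc p {p, q} q < cur p"
    using assms(1,4) by linarith
  moreover have "dual_loss (far_agent_dm \<alpha>) own_center_dc q {p, q} q = 0"
    using assms(2,3) by (auto simp: dual_loss_doubleton line_dist_def agent_pos_def)
  ultimately show ?thesis
    using assms(5) by auto
qed

lemma far_agent_not_in_core:
  fixes \<alpha> :: real
  assumes "\<alpha> \<ge> 1"
    and clustering: "is_clustering {0, 1, 2, 3} {1, 2, 3} 2 C x"
    and "balanced {0, 1, 2, 3} 2 C"
  shows "\<not> in_alpha_core \<alpha> {0, 1, 2, 3} {1, 2, 3} 2 (far_agent_dm \<alpha>) own_center_dc C x"
proof -
  let ?cur = "clustering_loss (far_agent_dm \<alpha>) own_center_dc 2 C x"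
  have "card {0, 1, 2, 3 :: nat} = 4" "(0 :: nat) \<in> {0, 1, 2, 3}"
    by simp_all
  then obtain s t p where st: "s < 2" "t < 2" "C s = {0, p}" "p \<noteq> 0" "card (C t) = 2"
    "C s \<inter> C t = {}" "C s \<union> C t = {0, 1, 2, 3}"
    by (rule balanced_two_clustering_of_four[OF clustering assms(3)])
  have "\<not> C t \<subseteq> {x t}"
  proof
    assume "C t \<subseteq> {x t}"
    then have "card (C t) \<le> card {x t}"
      by (intro card_mono) simp_all
    then show False
      using st(5) by simp
  qed
  then obtain q where q: "q \<in> C t" "q \<noteq> x t"
    by blast
  have "p \<in> C s" "p \<in> {0, 1, 2, 3}" "q \<in> {0, 1, 2, 3}"
    using q(1) st(3,7) by blast+
  then have p: "p \<in> {1, 2, 3}" and q_agent: "q \<in> {1, 2, 3}" and "p \<noteq> q"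
    using q(1) st(3,4,6) by auto
  have "far_agent_dm \<alpha> p 0 + own_center_dc (Inl p) (Inr (x s)) \<le> ?cur p"
    using clustering_loss_ge[OF clustering st(1)] st(3) by simp
  then have "?cur p \<ge> 3 * \<alpha>"
    using assms(1) st(4) by (simp add: line_dist_def agent_pos_def)
  moreover have "finite (C t)"
    using st(5) card.infinite by fastforce
  then have "far_agent_dm \<alpha> q q + own_center_dc (Inl q) (Inr (x t)) \<le> ?cur q"
    using clustering_loss_ge[OF clustering st(2)] q(1) by blast
  then have "?cur q > 0"
    using q(2) by (simp add: line_dist_def)
  ultimately have "\<forall>i\<in>{p, q}. \<alpha> * dual_loss (far_agent_dm \<alpha>) own_center_dc i {p, q} q < ?cur i"
    by (rule far_agent_blocking_pair[OF assms(1) p q_agent])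
  moreover have "real (card {p, q}) \<ge> real (card {0, 1, 2, 3 :: nat}) / real 2"
    using \<open>p \<noteq> q\<close> by simp
  ultimately show ?thesis
    unfolding in_alpha_core_def using p q_agent
    by (intro notI, elim notE, intro exI[of _ "{p, q}"] exI[of _ q] conjI) simp_all
qed

theorem mainTheorem17:
  fixes \<alpha> :: real
  assumes "\<alpha> \<ge> 1"
  shows "\<exists>(N :: nat set) (M :: nat set) (k :: nat) dm dc.
           dual_instance N M k dm dc \<and> k dvd card N \<and>
           (\<forall>C x. is_clustering N M k C x \<and> balanced N k C \<longrightarrow>
                  \<not> in_alpha_core \<alpha> N M k dm dc C x)"
  using far_agent_instance far_agent_not_in_core[OF assms]
  by (intro exI[of _ "{0, 1, 2, 3}"] exI[of _ "{1, 2, 3}"] exI[of _ 2]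
      exI[of _ "far_agent_dm \<alpha>"] exI[of _ own_center_dc]) auto

end
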